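(* Let $0<\varepsilon\le 1/64$ and $s\ge-\log\varepsilon$. Let $R_e,R_+:\mathbb R^3\to\mathbb R$ be functions with bounded derivatives up to order $4$, both supported in $\mathcal X_+=\{|y_1|\le e^{3s/2},|\check y|\le e^{s/2}\}$, and define $$\Phi(y)=\int_{\mathbb R^3}\frac{(R_+-R_e)(y-z)\,e^{-5s/2}}{(e^{-3s}z_1^2+e^{-s}|\check z|^2)^{1/2}}dz.$$ Then for every $y\in\mathcal X(s)=\{|y_1|\le2\varepsilon^{1/2}e^{3s/2},|\check y|\le2\varepsilon^{1/6}e^{s/2}\}$, every multi-index $|\gamma|\le4$ and $\nu\in\{2,3\}$, $$|\partial^\gamma\partial_1\Phi(y)|\lesssim e^{-3s/2}\big(\|\partial^\gamma R_e\|_{L^\infty}+\|\partial^\gamma R_+\|_{L^\infty}\big),\qquad |\partial^\gamma\partial_\nu\Phi(y)|\lesssim e^{-s/2}\big(\|\partial^\gamma R_e\|_{L^\infty}+\|\partial^\gamma R_+\|_{L^\infty}\big),$$ with implicit constants independent of $s,\varepsilon$ and of $R_e,R_+$.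
   Context: $\check y=(y_2,y_3)$. $\Phi$ is the Coulomb potential generated by the charge density $R_+-R_e$, written in the anisotropic self-similar variables $y_1=e^{3s/2}x_1$, $\check y=e^{s/2}\check x$. *)

theory Defs
  imports "HOL-Analysis.Analysis"
begin

text \<open>Points of R^3 are vectors real^3 with components y $ 1, y $ 2, y $ 3.
  The transverse part is (y $ 2, y $ 3) with Euclidean length cnorm y.\<close>

definition cnorm :: "real^3 \<Rightarrow> real" where
  "cnorm y = sqrt ((y $ 2)\<^sup>2 + (y $ 3)\<^sup>2)"

definition pd :: "3 \<Rightarrow> (real^3 \<Rightarrow> real) \<Rightarrow> real^3 \<Rightarrow> real" where
  "pd i f y = deriv (\<lambda>t. f (y + t *\<^sub>R axis i 1)) 0"

text \<open>Iterated partial derivatives; pdl (i # is) f = pd i (pdl is f), so a list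
  of indices encodes a multi-index (its length is the order).\<close>
fun pdl :: "3 list \<Rightarrow> (real^3 \<Rightarrow> real) \<Rightarrow> real^3 \<Rightarrow> real" where
  "pdl [] f = f"
| "pdl (i # is) f = pd i (pdl is f)"

definition C4b :: "(real^3 \<Rightarrow> real) \<Rightarrow> bool" where
  "C4b f \<longleftrightarrow>
     (\<forall>is i y. length is < 4 \<longrightarrow>
        ((\<lambda>t. pdl is f (y + t *\<^sub>R axis i 1)) has_real_derivative pdl (i # is) f y) (at 0))
   \<and> (\<forall>is. length is \<le> 4 \<longrightarrow>
        continuous_on UNIV (pdl is f) \<and> bounded (range (pdl is f)))"

text \<open>Sup norm (L^infinity norm for continuous functions).\<close>
definition supn :: "(real^3 \<Rightarrow> real) \<Rightarrow> real" where
  "supn g = (SUP y. \<bar>g y\<bar>)"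

definition Xplus :: "real \<Rightarrow> (real^3) set" where
  "Xplus s = {y. \<bar>y $ 1\<bar> \<le> exp (3 * s / 2) \<and> cnorm y \<le> exp (s / 2)}"

definition Xs :: "real \<Rightarrow> real \<Rightarrow> (real^3) set" where
  "Xs \<epsilon> s = {y. \<bar>y $ 1\<bar> \<le> 2 * sqrt \<epsilon> * exp (3 * s / 2) \<and> cnorm y \<le> 2 * root 6 \<epsilon> * exp (s / 2)}"

definition Phi :: "real \<Rightarrow> (real^3 \<Rightarrow> real) \<Rightarrow> (real^3 \<Rightarrow> real) \<Rightarrow> real^3 \<Rightarrow> real" where
  "Phi s Rel Rpl y = (LINT z|lborel.
      (Rpl (y - z) - Rel (y - z)) * exp (-5 * s / 2)
        / sqrt (exp (-3 * s) * (z $ 1)\<^sup>2 + exp (-s) * (cnorm z)\<^sup>2))"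

end

theory Submission
  imports Defs
begin

text \<open>
  Write w = (e^(-3s/2), e^(-s/2), e^(-s/2)) for the weights of the self-similar variables and
  rho = Rpl - Rel. Then Phi is the convolution of rho with K(z) = (w1 w2 w3) / |diag w z|, the
  Newtonian kernel in the variables diag w z. Partial derivatives of rho commute with the
  convolution, and one of them can be moved onto the kernel, so that
  d^gamma d_j Phi = (d_j K) * (d^gamma rho). The kernel derivative satisfies
  |d_j K(z)| <= w1 w2 w3 w_j / |diag w z|^2 <= w1 w2 w3 w_j prod_k (w_k |z_k|)^(-2/3),
  and for y in X(s) only the points z with w_k |z_k| <= 2 for all k contribute. On that box
  Tonelli's theorem computes the integral of the product bound, giving
  |d^gamma d_j Phi(y)| <= 432 w_j (sup |d^gamma Rel| + sup |d^gamma Rpl|).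
\<close>

section \<open>Lebesgue measure on cartesian spaces\<close>

lemma Basis_cart_real: "(Basis :: (real^'n) set) = range (\<lambda>k. axis k 1)"
  by (auto simp: Basis_vec_def)

lemma nn_integral_lborel_cart_prod:
  fixes g :: "'n::finite \<Rightarrow> real \<Rightarrow> ennreal"
  assumes [measurable]: "\<And>k. g k \<in> borel_measurable borel"
  shows "(\<integral>\<^sup>+z. (\<Prod>k\<in>UNIV. g k (z $ k)) \<partial>(lborel :: (real^'n) measure))
           = (\<Prod>k\<in>UNIV. \<integral>\<^sup>+u. g k u \<partial>lborel)"
proof -
  define f where "f b = g (SOME k. b = axis k 1)" for b :: "real^'n"
  have f_axis: "f (axis k 1) = g k" for k
    unfolding f_def by (rule arg_cong[where f=g]) (rule some_equality, auto simp: axis_eq_axis)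
  have inj: "inj (\<lambda>k::'n. axis k (1::real))"
    by (auto simp: inj_on_def axis_eq_axis)
  have "(\<integral>\<^sup>+z. (\<Prod>b\<in>Basis. f b (z \<bullet> b)) \<partial>(lborel :: (real^'n) measure))
          = (\<Prod>b\<in>Basis. \<integral>\<^sup>+u. f b u \<partial>lborel)"
    by (rule nn_integral_lborel_prod) (auto simp: Basis_cart_real f_axis)
  then show ?thesis
    by (simp add: Basis_cart_real prod.reindex[OF inj] f_axis inner_axis)
qed

lemma AE_lborel_cart_nonzero: "AE z in (lborel :: (real^'n::finite) measure). z $ k \<noteq> 0"
proof -
  have "{z::real^'n. z $ k = 0} \<in> null_sets lborel"
    using negligible_standard_hyperplane_cart[of k]
    by (subst null_sets_completion_iff[symmetric]) (auto simp: negligible_iff_null_sets)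
  then show ?thesis by (rule AE_I') auto
qed

lemma lborel_integral_translate:
  fixes g :: "'a::euclidean_space \<Rightarrow> real"
  assumes "g \<in> borel_measurable borel"
  shows "(LINT x|lborel. g (t + x)) = (LINT x|lborel. g x)"
  using integral_distr[of "(+) t" lborel borel g] assms by (simp add: lborel_distr_plus)

lemma lborel_nn_integral_translate:
  fixes g :: "'a::euclidean_space \<Rightarrow> ennreal"
  assumes "g \<in> borel_measurable borel"
  shows "(\<integral>\<^sup>+x. g (t + x) \<partial>lborel) = (\<integral>\<^sup>+x. g x \<partial>lborel)"
  using nn_integral_distr[of "(+) t" lborel borel g] assms by (simp add: lborel_distr_plus)

lemma lborel_integrable_translate:
  fixes g :: "'a::euclidean_space \<Rightarrow> real"
  assumes "g \<in> borel_measurable borel" "integrable lborel g"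
  shows "integrable lborel (\<lambda>x. g (t + x))"
  using integrable_distr_eq[of "(+) t" lborel borel g] assms by (simp add: lborel_distr_plus)

section \<open>Powers of the coordinates on anisotropic boxes\<close>

lemma abs_powr_has_integral_symmetric:
  assumes "0 \<le> A" "-1 < p"
  shows "((\<lambda>u::real. \<bar>u\<bar> powr p) has_integral 2 * (A powr (p + 1) / (p + 1))) {-A..A}"
proof -
  have half: "((\<lambda>u. \<bar>u\<bar> powr p) has_integral (A powr (p + 1) / (p + 1))) {0..A}"
    using has_integral_powr_from_0[OF assms(2,1)]
    by (subst has_integral_cong[of _ _ "\<lambda>u. u powr p"]) auto
  then have "((\<lambda>u. \<bar>-u\<bar> powr p) has_integral (A powr (p + 1) / (p + 1))) {-A..-0}"
    by (subst has_integral_reflect_real) simp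
  then have "((\<lambda>u. \<bar>u\<bar> powr p) has_integral (A powr (p + 1) / (p + 1))) {-A..0}"
    by simp
  then have "((\<lambda>u. \<bar>u\<bar> powr p) has_integral
      A powr (p + 1) / (p + 1) + A powr (p + 1) / (p + 1)) {-A..A}"
    using assms by (intro has_integral_combine[OF _ _ _ half]) auto
  then show ?thesis
    by (simp only: mult_2)
qed

lemma nn_integral_scaled_abs_powr:
  assumes "0 \<le> \<rho>" "-1 < p" "0 < w"
  shows "(\<integral>\<^sup>+u. ennreal (indicator {u. w * \<bar>u\<bar> \<le> \<rho>} u * (w * \<bar>u\<bar>) powr p) \<partial>lborel)
           = ennreal (2 * \<rho> powr (p + 1) / ((p + 1) * w))"
proof (rule nn_integral_has_integral_lborel)
  show "(\<lambda>u. indicator {u. w * \<bar>u\<bar> \<le> \<rho>} u * (w * \<bar>u\<bar>) powr p) \<in> borel_measurable borel"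
    by measurable
  show "0 \<le> indicator {u. w * \<bar>u\<bar> \<le> \<rho>} u * (w * \<bar>u\<bar>) powr p" for u
    by simp
  define A where "A = \<rho> / w"
  have "0 \<le> A"
    using assms by (simp add: A_def)
  from has_integral_mult_right[OF abs_powr_has_integral_symmetric[OF this assms(2)], of "w powr p"]
  have "((\<lambda>u. (w * \<bar>u\<bar>) powr p) has_integral w powr p * (2 * (A powr (p + 1) / (p + 1)))) {-A..A}"
    using assms by (simp add: powr_mult)
  moreover have "w powr p * (2 * (A powr (p + 1) / (p + 1))) = 2 * \<rho> powr (p + 1) / ((p + 1) * w)"
  proof -
    have "(\<rho> / w) powr (p + 1) = \<rho> powr (p + 1) / (w powr p * w)"
      using assms by (simp add: powr_divide powr_add)
    then show ?thesis
      using assms powr_gt_zero[of w p] by (simp add: A_def)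
  qed
  moreover have "indicator {u. w * \<bar>u\<bar> \<le> \<rho>} u * (w * \<bar>u\<bar>) powr p
      = (if u \<in> {-A..A} then (w * \<bar>u\<bar>) powr p else 0)" for u
  proof -
    have "w * \<bar>u\<bar> \<le> \<rho> \<longleftrightarrow> \<bar>u\<bar> \<le> A"
      using assms by (simp add: A_def pos_le_divide_eq mult.commute[of w])
    then show ?thesis
      by (auto simp: abs_le_iff)
  qed
  ultimately show "((\<lambda>u. indicator {u. w * \<bar>u\<bar> \<le> \<rho>} u * (w * \<bar>u\<bar>) powr p)
      has_integral 2 * \<rho> powr (p + 1) / ((p + 1) * w)) UNIV"
    by (simp only: has_integral_restrict_UNIV)
qed

definition aniso_box :: "real^'n::finite \<Rightarrow> real \<Rightarrow> (real^'n) set" where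
  "aniso_box w \<rho> = {z. \<forall>k. w $ k * \<bar>z $ k\<bar> \<le> \<rho>}"

lemma aniso_box_sets [measurable]: "aniso_box w \<rho> \<in> sets borel"
  unfolding aniso_box_def by measurable

lemma nn_integral_aniso_box_bound:
  fixes L :: "real^'n::finite \<Rightarrow> real" and w :: "real^'n"
  assumes [measurable]: "L \<in> borel_measurable borel"
    and w: "\<And>k. 0 < w $ k" and \<rho>: "0 \<le> \<rho>" and p: "-1 < p" and C: "0 \<le> C"
    and bound: "\<And>z. (\<And>k. z $ k \<noteq> 0) \<Longrightarrow> \<bar>L z\<bar> \<le> C * (\<Prod>k\<in>UNIV. (w $ k * \<bar>z $ k\<bar>) powr p)"
  shows "(\<integral>\<^sup>+z. ennreal (\<bar>L z\<bar> * indicator (aniso_box w \<rho>) z) \<partial>lborel)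
           \<le> ennreal (C * (2 * \<rho> powr (p + 1) / (p + 1)) ^ CARD('n) / (\<Prod>k\<in>UNIV. w $ k))"
proof -
  define g where "g k u = indicator {u. w $ k * \<bar>u\<bar> \<le> \<rho>} u * (w $ k * \<bar>u\<bar>) powr p" for k u
  have g_nonneg: "0 \<le> g k u" for k u
    by (simp add: g_def)
  have "AE z in (lborel :: (real^'n) measure). \<forall>k\<in>UNIV. z $ k \<noteq> 0"
    by (intro AE_finite_allI ballI AE_lborel_cart_nonzero) simp
  then have "(\<integral>\<^sup>+z. ennreal (\<bar>L z\<bar> * indicator (aniso_box w \<rho>) z) \<partial>lborel)
      \<le> (\<integral>\<^sup>+z. ennreal C * (\<Prod>k\<in>UNIV. ennreal (g k (z $ k))) \<partial>lborel)"
  proof (rule nn_integral_mono_AE[OF AE_mp], intro AE_I2 impI)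
    fix z :: "real^'n"
    assume "\<forall>k\<in>UNIV. z $ k \<noteq> 0"
    then have "\<bar>L z\<bar> * indicator (aniso_box w \<rho>) z
        \<le> C * (\<Prod>k\<in>UNIV. (w $ k * \<bar>z $ k\<bar>) powr p) * indicator (aniso_box w \<rho>) z"
      using bound by (intro mult_right_mono) auto
    also have "\<dots> = C * (\<Prod>k\<in>UNIV. g k (z $ k))"
      by (auto simp: g_def aniso_box_def indicator_def prod.neutral)
    finally show "ennreal (\<bar>L z\<bar> * indicator (aniso_box w \<rho>) z)
        \<le> ennreal C * (\<Prod>k\<in>UNIV. ennreal (g k (z $ k)))"
      using C g_nonneg by (simp add: prod_ennreal ennreal_mult'[symmetric] ennreal_leI)
  qed
  also have "\<dots> = ennreal C * (\<Prod>k\<in>UNIV. \<integral>\<^sup>+u. ennreal (g k u) \<partial>lborel)"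
    using g_nonneg by (simp add: nn_integral_cmult nn_integral_lborel_cart_prod[symmetric] g_def)
  also have "\<dots> = ennreal C * (\<Prod>k\<in>UNIV. ennreal (2 * \<rho> powr (p + 1) / ((p + 1) * w $ k)))"
    using w \<rho> p by (simp only: g_def nn_integral_scaled_abs_powr)
  also have "\<dots> = ennreal (C * (\<Prod>k\<in>UNIV. 2 * \<rho> powr (p + 1) / ((p + 1) * w $ k)))"
  proof -
    have "0 \<le> 2 * \<rho> powr (p + 1) / ((p + 1) * w $ k)" for k
      using w[of k] p by simp
    then show ?thesis
      using C by (simp add: prod_ennreal ennreal_mult prod_nonneg)
  qed
  also have "\<dots> = ennreal (C * (2 * \<rho> powr (p + 1) / (p + 1)) ^ CARD('n) / (\<Prod>k\<in>UNIV. w $ k))"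
    by (simp add: prod_dividef prod.distrib power_divide power_mult_distrib)
  finally show ?thesis .
qed

section \<open>The anisotropic Coulomb kernel\<close>

lemma inverse_sum_squares_le_prod_powr:
  fixes X :: "'i \<Rightarrow> real"
  assumes I: "finite I" "I \<noteq> {}" and X: "\<And>i. i \<in> I \<Longrightarrow> 0 < X i"
  shows "1 / (\<Sum>i\<in>I. (X i)\<^sup>2) \<le> (\<Prod>i\<in>I. X i powr (-2 / card I))"
proof -
  define m where "m = Max (X ` I)"
  have "m \<in> X ` I"
    using I by (simp add: m_def)
  then obtain i where i: "i \<in> I" "X i = m"
    by auto
  have m: "0 < m" using X i by auto
  have n: "0 < card I" using I by (simp add: card_gt_0_iff)
  have "(\<Prod>i\<in>I. X i) \<le> (\<Prod>i\<in>I. m)"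
    using I X by (intro prod_mono) (auto simp: m_def less_imp_le)
  then have "(\<Prod>i\<in>I. X i) powr (2 / card I) \<le> (m ^ card I) powr (2 / card I)"
    using X by (intro powr_mono2) (auto simp: prod_nonneg less_imp_le)
  also have "\<dots> = m\<^sup>2"
  proof -
    have "m ^ card I = m powr card I"
      using m by (simp add: powr_realpow)
    then have "(m ^ card I) powr (2 / card I) = m powr (card I * (2 / card I))"
      by (simp add: powr_powr)
    also have "\<dots> = m\<^sup>2"
      using m n by (simp add: powr_numeral)
    finally show ?thesis .
  qed
  also have "\<dots> \<le> (\<Sum>i\<in>I. (X i)\<^sup>2)"
    using member_le_sum[of i I "\<lambda>i. (X i)\<^sup>2"] i I by auto
  finally have le: "(\<Prod>i\<in>I. X i) powr (2 / card I) \<le> (\<Sum>i\<in>I. (X i)\<^sup>2)" .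
  have pos: "0 < (\<Prod>i\<in>I. X i) powr (2 / card I)"
    using X prod_pos[of I X] by (simp add: less_imp_neq[symmetric])
  have "1 / (\<Sum>i\<in>I. (X i)\<^sup>2) \<le> 1 / (\<Prod>i\<in>I. X i) powr (2 / card I)"
    using le pos by (intro divide_left_mono mult_pos_pos) linarith+
  also have "\<dots> = (\<Prod>i\<in>I. X i powr (-2 / card I))"
    by (subst prod_powr_distrib[symmetric]) (simp add: powr_minus_divide)
  finally show ?thesis .
qed

definition aniso_quad :: "real^'n::finite \<Rightarrow> real^'n \<Rightarrow> real" where
  "aniso_quad w z = (\<Sum>k\<in>UNIV. (w $ k * z $ k)\<^sup>2)"

(* The Newtonian kernel 1/|x| in the variables x = diag w z, multiplied by the Jacobian. *)
definition aniso_kernel :: "real^'n::finite \<Rightarrow> real^'n \<Rightarrow> real" where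
  "aniso_kernel w z = (\<Prod>k\<in>UNIV. w $ k) / sqrt (aniso_quad w z)"

definition aniso_kernel_deriv :: "real^'n::finite \<Rightarrow> 'n \<Rightarrow> real^'n \<Rightarrow> real" where
  "aniso_kernel_deriv w j z
     = - (\<Prod>k\<in>UNIV. w $ k) * (w $ j)\<^sup>2 * z $ j / (aniso_quad w z * sqrt (aniso_quad w z))"

lemma aniso_kernel_measurable [measurable]: "aniso_kernel w \<in> borel_measurable borel"
  unfolding aniso_kernel_def aniso_quad_def by measurable

lemma aniso_kernel_deriv_measurable [measurable]: "aniso_kernel_deriv w j \<in> borel_measurable borel"
  unfolding aniso_kernel_deriv_def aniso_quad_def by measurable

lemma aniso_quad_nonneg: "0 \<le> aniso_quad w z"
  unfolding aniso_quad_def by (simp add: sum_nonneg)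

lemma aniso_quad_ge_component: "(w $ k * z $ k)\<^sup>2 \<le> aniso_quad w (z :: real^'n::finite)"
  unfolding aniso_quad_def by (rule member_le_sum) auto

lemma aniso_quad_pos:
  "w $ k \<noteq> 0 \<Longrightarrow> z $ k \<noteq> 0 \<Longrightarrow> 0 < aniso_quad w (z :: real^'n::finite)"
  using aniso_quad_ge_component[of w k z] by (smt (verit) mult_eq_0_iff zero_less_power2)

lemma inverse_aniso_quad_le:
  fixes w z :: "real^'n::finite"
  assumes w: "\<And>k. 0 < w $ k" and z: "\<And>k. z $ k \<noteq> 0"
  shows "1 / aniso_quad w z \<le> (\<Prod>k\<in>UNIV. (w $ k * \<bar>z $ k\<bar>) powr (-2 / CARD('n)))"
  using inverse_sum_squares_le_prod_powr[of UNIV "\<lambda>k. w $ k * \<bar>z $ k\<bar>"] w z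
  by (simp add: aniso_quad_def power_mult_distrib)

lemma abs_aniso_kernel_le:
  fixes w z :: "real^'n::finite"
  assumes w: "\<And>k. 0 < w $ k" and z: "\<And>k. z $ k \<noteq> 0"
  shows "\<bar>aniso_kernel w z\<bar>
           \<le> (\<Prod>k\<in>UNIV. w $ k) * (\<Prod>k\<in>UNIV. (w $ k * \<bar>z $ k\<bar>) powr (-1 / CARD('n)))"
proof -
  have P: "0 < (\<Prod>k\<in>UNIV. w $ k)"
    using w by (simp add: prod_pos)
  have "\<bar>aniso_kernel w z\<bar> = (\<Prod>k\<in>UNIV. w $ k) * sqrt (1 / aniso_quad w z)"
    using P aniso_quad_nonneg[of w z] by (simp add: aniso_kernel_def abs_mult real_sqrt_divide)
  also have "\<dots> \<le> (\<Prod>k\<in>UNIV. w $ k) * sqrt (\<Prod>k\<in>UNIV. (w $ k * \<bar>z $ k\<bar>) powr (-2 / CARD('n)))"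
    using P by (intro mult_left_mono real_sqrt_le_mono inverse_aniso_quad_le[OF w z]) simp
  also have "sqrt (\<Prod>k\<in>UNIV. (w $ k * \<bar>z $ k\<bar>) powr (-2 / CARD('n)))
      = (\<Prod>k\<in>UNIV. (w $ k * \<bar>z $ k\<bar>) powr (-1 / CARD('n)))"
    by (simp add: powr_half_sqrt[symmetric] prod_nonneg prod_powr_distrib[symmetric] powr_powr)
  finally show ?thesis .
qed

lemma abs_aniso_kernel_deriv_le:
  fixes w z :: "real^'n::finite"
  assumes w: "\<And>k. 0 < w $ k" and z: "\<And>k. z $ k \<noteq> 0"
  shows "\<bar>aniso_kernel_deriv w j z\<bar>
           \<le> (\<Prod>k\<in>UNIV. w $ k) * w $ j * (\<Prod>k\<in>UNIV. (w $ k * \<bar>z $ k\<bar>) powr (-2 / CARD('n)))"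
proof -
  define Q where "Q = aniso_quad w z"
  have Q: "0 < Q"
    unfolding Q_def using w[of j] z[of j] by (intro aniso_quad_pos) auto
  have P: "0 < (\<Prod>k\<in>UNIV. w $ k)"
    using w by (simp add: prod_pos)
  have "w $ j * \<bar>z $ j\<bar> \<le> sqrt Q"
    using aniso_quad_ge_component[of w j z] w[of j]
    by (simp add: Q_def real_le_rsqrt abs_mult power_mult_distrib)
  have "\<bar>aniso_kernel_deriv w j z\<bar> = (\<Prod>k\<in>UNIV. w $ k) * w $ j * (w $ j * \<bar>z $ j\<bar>) / (Q * sqrt Q)"
    using w[of j] P Q unfolding aniso_kernel_deriv_def Q_def[symmetric]
    by (simp add: abs_mult abs_divide power2_eq_square)
  also have "\<dots> \<le> (\<Prod>k\<in>UNIV. w $ k) * w $ j * sqrt Q / (Q * sqrt Q)"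
    using w[of j] P Q \<open>w $ j * \<bar>z $ j\<bar> \<le> sqrt Q\<close>
    by (intro divide_right_mono mult_left_mono) auto
  also have "\<dots> = (\<Prod>k\<in>UNIV. w $ k) * w $ j * (1 / Q)"
    using Q by simp
  also have "\<dots> \<le> (\<Prod>k\<in>UNIV. w $ k) * w $ j * (\<Prod>k\<in>UNIV. (w $ k * \<bar>z $ k\<bar>) powr (-2 / CARD('n)))"
    unfolding Q_def using w[of j] P by (intro mult_left_mono inverse_aniso_quad_le[OF w z]) auto
  finally show ?thesis .
qed

definition line_derivative ::
    "('a::real_normed_vector \<Rightarrow> real) \<Rightarrow> ('a \<Rightarrow> real) \<Rightarrow> 'a \<Rightarrow> 'a \<Rightarrow> bool" where
  "line_derivative K dK e w \<longleftrightarrow>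
     (\<forall>\<tau>. ((\<lambda>u. K (w + u *\<^sub>R e)) has_real_derivative dK (w + \<tau> *\<^sub>R e)) (at \<tau>))
     \<and> continuous_on UNIV (\<lambda>\<tau>. dK (w + \<tau> *\<^sub>R e))"

lemma aniso_quad_along_axis:
  fixes w x :: "real^'n::finite"
  shows "aniso_quad w (x + u *\<^sub>R axis j 1) = aniso_quad w x + (w $ j)\<^sup>2 * (2 * x $ j * u + u\<^sup>2)"
proof -
  have "(w $ k * (x + u *\<^sub>R axis j 1) $ k)\<^sup>2
      = (w $ k * x $ k)\<^sup>2 + (if k = j then (w $ j)\<^sup>2 * (2 * x $ j * u + u\<^sup>2) else 0)" for k
    by (auto simp: axis_def power2_eq_square algebra_simps)
  then show ?thesis
    by (simp add: aniso_quad_def sum.distrib)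
qed

lemma aniso_kernel_has_derivative_along_axis:
  fixes w x :: "real^'n::finite"
  assumes pos: "0 < aniso_quad w (x + \<tau> *\<^sub>R axis j 1)"
  shows "((\<lambda>u. aniso_kernel w (x + u *\<^sub>R axis j 1))
           has_real_derivative aniso_kernel_deriv w j (x + \<tau> *\<^sub>R axis j 1)) (at \<tau>)"
proof -
  define q where "q u = aniso_quad w (x + u *\<^sub>R axis j 1)" for u
  have q: "q u = aniso_quad w x + (w $ j)\<^sup>2 * (2 * x $ j * u + u\<^sup>2)" for u
    by (simp add: q_def aniso_quad_along_axis)
  have dq: "(q has_real_derivative 2 * (w $ j)\<^sup>2 * (x $ j + \<tau>)) (at \<tau>)"
    unfolding q by (auto intro!: derivative_eq_intros simp: algebra_simps)
  have "((\<lambda>u. (\<Prod>k\<in>UNIV. w $ k) / sqrt (q u)) has_real_derivative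
      - ((\<Prod>k\<in>UNIV. w $ k) * (inverse (sqrt (q \<tau>)) / 2 * (2 * (w $ j)\<^sup>2 * (x $ j + \<tau>))))
        / (sqrt (q \<tau>) * sqrt (q \<tau>))) (at \<tau>)"
    using pos unfolding q_def[symmetric] by (auto intro!: derivative_eq_intros dq)
  moreover have "- ((\<Prod>k\<in>UNIV. w $ k) * (inverse (sqrt (q \<tau>)) / 2 * (2 * (w $ j)\<^sup>2 * (x $ j + \<tau>))))
        / (sqrt (q \<tau>) * sqrt (q \<tau>)) = aniso_kernel_deriv w j (x + \<tau> *\<^sub>R axis j 1)"
    using pos by (simp add: aniso_kernel_deriv_def q_def axis_def field_simps)
  ultimately show ?thesis
    by (simp add: aniso_kernel_def q_def)
qed

lemma AE_aniso_kernel_along_axis: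
  fixes w :: "real^'n::finite"
  assumes w: "\<And>k. 0 < w $ k" and n: "2 \<le> CARD('n)"
  shows "AE x in lborel. line_derivative (aniso_kernel w) (aniso_kernel_deriv w j) (axis j 1) x"
proof -
  have "UNIV \<noteq> {j}"
  proof
    assume "UNIV = {j}"
    then have "CARD('n) = card {j}"
      by (rule arg_cong)
    with n show False
      by simp
  qed
  then obtain k where k: "k \<noteq> j"
    by auto
  show ?thesis
    using AE_lborel_cart_nonzero[of k]
  proof eventually_elim
    case (elim x)
    have pos: "0 < aniso_quad w (x + u *\<^sub>R axis j 1)" for u
      using w[of k] elim k by (intro aniso_quad_pos[of w k]) (auto simp: axis_def)
    have "continuous_on UNIV (\<lambda>u. aniso_quad w (x + u *\<^sub>R axis j 1))"
      unfolding aniso_quad_along_axis by (intro continuous_intros)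
    then have "continuous_on UNIV (\<lambda>\<tau>. aniso_kernel_deriv w j (x + \<tau> *\<^sub>R axis j 1))"
      unfolding aniso_kernel_deriv_def using pos
      by (intro continuous_intros) (auto simp: less_imp_neq[symmetric])
    then show ?case
      unfolding line_derivative_def using aniso_kernel_has_derivative_along_axis[OF pos] by blast
  qed
qed

section \<open>Local integrability and convolution\<close>

definition loc_integrable :: "('a::euclidean_space \<Rightarrow> real) \<Rightarrow> bool" where
  "loc_integrable L \<longleftrightarrow> L \<in> borel_measurable borel
     \<and> (\<forall>r. integrable lborel (\<lambda>z. L z * indicator (cball 0 r) z))"

lemma loc_integrable_measurable: "loc_integrable L \<Longrightarrow> L \<in> borel_measurable borel"
  by (simp add: loc_integrable_def)

lemma loc_integrable_cball:
  "loc_integrable L \<Longrightarrow> integrable lborel (\<lambda>z. L z * indicator (cball 0 r) z)"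
  by (simp add: loc_integrable_def)

lemma loc_integrable_aniso_boxI:
  fixes L :: "real^'n::finite \<Rightarrow> real"
  assumes [measurable]: "L \<in> borel_measurable borel" and w: "\<And>k. 0 < w $ k"
    and fin: "\<And>\<rho>. 0 \<le> \<rho> \<Longrightarrow> (\<integral>\<^sup>+z. ennreal (\<bar>L z\<bar> * indicator (aniso_box w \<rho>) z) \<partial>lborel) < \<infinity>"
  shows "loc_integrable L"
  unfolding loc_integrable_def
proof (intro conjI allI)
  fix r :: real
  define \<rho> where "\<rho> = max r 0 * (\<Sum>k\<in>UNIV. w $ k)"
  have \<rho>: "0 \<le> \<rho>"
    using w by (simp add: \<rho>_def sum_nonneg less_imp_le)
  have "cball 0 r \<subseteq> aniso_box w \<rho>"
  proof
    fix z :: "real^'n"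
    assume "z \<in> cball 0 r"
    then have "\<bar>z $ k\<bar> \<le> max r 0" for k
      using component_le_norm_cart[of z k] by (simp add: mem_cball_0)
    then have "w $ k * \<bar>z $ k\<bar> \<le> max r 0 * w $ k" for k
      using w[of k] by (simp add: mult.commute mult_left_mono)
    also have "max r 0 * w $ k \<le> \<rho>" for k
      unfolding \<rho>_def using w by (intro mult_left_mono member_le_sum) (auto intro: less_imp_le)
    finally show "z \<in> aniso_box w \<rho>"
      by (simp add: aniso_box_def)
  qed
  then have "(\<integral>\<^sup>+z. ennreal (norm (L z * indicator (cball 0 r) z)) \<partial>lborel)
      \<le> (\<integral>\<^sup>+z. ennreal (\<bar>L z\<bar> * indicator (aniso_box w \<rho>) z) \<partial>lborel)"
    by (intro nn_integral_mono ennreal_leI) (auto simp: abs_mult indicator_def)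
  then show "integrable lborel (\<lambda>z. L z * indicator (cball 0 r) z)"
    using fin[OF \<rho>] by (intro integrableI_bounded) (measurable, auto)
qed simp

lemma loc_integrable_aniso_kernel:
  fixes w :: "real^'n::finite"
  assumes w: "\<And>k. 0 < w $ k" and n: "2 \<le> CARD('n)"
  shows "loc_integrable (aniso_kernel w)"
proof (rule loc_integrable_aniso_boxI[OF _ w])
  fix \<rho> :: real
  assume "0 \<le> \<rho>"
  moreover have "-1 < -1 / real CARD('n)"
    using n by (simp add: field_simps)
  ultimately have "(\<integral>\<^sup>+z. ennreal (\<bar>aniso_kernel w z\<bar> * indicator (aniso_box w \<rho>) z) \<partial>lborel)
      \<le> ennreal ((\<Prod>k\<in>UNIV. w $ k)
                  * (2 * \<rho> powr (-1 / CARD('n) + 1) / (-1 / CARD('n) + 1)) ^ CARD('n)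
                  / (\<Prod>k\<in>UNIV. w $ k))"
    using w by (intro nn_integral_aniso_box_bound[OF aniso_kernel_measurable w] abs_aniso_kernel_le)
      (auto simp: prod_nonneg less_imp_le)
  then show "(\<integral>\<^sup>+z. ennreal (\<bar>aniso_kernel w z\<bar> * indicator (aniso_box w \<rho>) z) \<partial>lborel) < \<infinity>"
    by (rule le_less_trans) simp
qed simp

lemma loc_integrable_aniso_kernel_deriv:
  fixes w :: "real^'n::finite"
  assumes w: "\<And>k. 0 < w $ k" and n: "3 \<le> CARD('n)"
  shows "loc_integrable (aniso_kernel_deriv w j)"
proof (rule loc_integrable_aniso_boxI[OF _ w])
  fix \<rho> :: real
  assume "0 \<le> \<rho>"
  moreover have "-1 < -2 / real CARD('n)"
    using n by (simp add: field_simps)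
  ultimately have "(\<integral>\<^sup>+z. ennreal (\<bar>aniso_kernel_deriv w j z\<bar> * indicator (aniso_box w \<rho>) z) \<partial>lborel)
      \<le> ennreal ((\<Prod>k\<in>UNIV. w $ k) * w $ j
                  * (2 * \<rho> powr (-2 / CARD('n) + 1) / (-2 / CARD('n) + 1)) ^ CARD('n)
                  / (\<Prod>k\<in>UNIV. w $ k))"
    using w by (intro nn_integral_aniso_box_bound[OF aniso_kernel_deriv_measurable w]
        abs_aniso_kernel_deriv_le) (auto simp: prod_nonneg less_imp_le)
  then show "(\<integral>\<^sup>+z. ennreal (\<bar>aniso_kernel_deriv w j z\<bar> * indicator (aniso_box w \<rho>) z) \<partial>lborel) < \<infinity>"
    by (rule le_less_trans) simp
qed simp

definition conv :: "('a::euclidean_space \<Rightarrow> real) \<Rightarrow> ('a \<Rightarrow> real) \<Rightarrow> 'a \<Rightarrow> real" where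
  "conv L f y = (LINT z|lborel. f (y - z) * L z)"

lemma norm_le_of_support:
  fixes f :: "'a::real_normed_vector \<Rightarrow> 'b::zero"
  assumes "\<And>x. f x \<noteq> 0 \<Longrightarrow> norm x \<le> R" "f (y - z) \<noteq> 0"
  shows "norm z \<le> norm y + R"
  using norm_triangle_ineq4[of y "y - z"] assms by fastforce

lemma integrable_conv_integrand:
  fixes L f :: "'a::euclidean_space \<Rightarrow> real"
  assumes L: "loc_integrable L" and [measurable]: "f \<in> borel_measurable borel"
    and bounded: "\<And>x. \<bar>f x\<bar> \<le> B" and support: "\<And>x. f x \<noteq> 0 \<Longrightarrow> norm x \<le> R"
  shows "integrable lborel (\<lambda>z. f (y - z) * L z)"
proof (rule Bochner_Integration.integrable_bound)
  have [measurable]: "L \<in> borel_measurable borel"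
    using L by (rule loc_integrable_measurable)
  show "integrable lborel (\<lambda>z. B * \<bar>L z * indicator (cball 0 (norm y + R)) z\<bar>)"
    using L by (intro integrable_mult_right integrable_abs loc_integrable_cball)
  show "(\<lambda>z. f (y - z) * L z) \<in> borel_measurable lborel"
    by measurable
  have "norm (f (y - z) * L z) \<le> norm (B * \<bar>L z * indicator (cball 0 (norm y + R)) z\<bar>)" for z
  proof (cases "f (y - z) = 0")
    case False
    then have "z \<in> cball 0 (norm y + R)"
      using norm_le_of_support[OF support] by simp
    then show ?thesis
      using bounded[of "y - z"] bounded[of 0] by (simp add: abs_mult mult_right_mono)
  qed simp
  then show "AE z in lborel.
      norm (f (y - z) * L z) \<le> norm (B * \<bar>L z * indicator (cball 0 (norm y + R)) z\<bar>)"
    by simp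
qed

lemma has_real_derivative_along_line:
  fixes e x :: "'a::real_normed_vector"
  assumes "\<And>x. ((\<lambda>t. f (x + t *\<^sub>R e)) has_real_derivative f' x) (at 0)"
  shows "((\<lambda>t. f (x + t *\<^sub>R e)) has_real_derivative f' (x + \<tau> *\<^sub>R e)) (at \<tau>)"
proof -
  have "((\<lambda>t. f ((x + \<tau> *\<^sub>R e) + t *\<^sub>R e)) has_real_derivative f' (x + \<tau> *\<^sub>R e)) (at 0)"
    by (rule assms)
  then have "((\<lambda>t. f (x + (t + \<tau>) *\<^sub>R e)) has_real_derivative f' (x + \<tau> *\<^sub>R e)) (at 0)"
    by (simp add: scaleR_add_left add_ac)
  then show ?thesis
    using DERIV_shift[of "\<lambda>t. f (x + t *\<^sub>R e)" "f' (x + \<tau> *\<^sub>R e)" 0 \<tau>] by simp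
qed

lemma lipschitz_along_line:
  fixes e x :: "'a::real_normed_vector"
  assumes "\<And>x. ((\<lambda>t. f (x + t *\<^sub>R e)) has_real_derivative f' x) (at 0)"
    and "\<And>x. \<bar>f' x\<bar> \<le> M"
  shows "\<bar>f (x + t *\<^sub>R e) - f x\<bar> \<le> M * \<bar>t\<bar>"
proof -
  have "norm (f (x + t *\<^sub>R e) - f (x + 0 *\<^sub>R e)) \<le> M * norm (t - 0)"
    using has_real_derivative_along_line[OF assms(1)] assms(2)
    by (intro field_differentiable_bound[where S=UNIV and f'="\<lambda>\<tau>. f' (x + \<tau> *\<^sub>R e)"])
      (auto simp: has_field_derivative_at_within)
  then show ?thesis
    by simp
qed

lemma conv_difference_quotient:
  fixes L f :: "'a::euclidean_space \<Rightarrow> real"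
  assumes L: "loc_integrable L" and f_meas: "f \<in> borel_measurable borel"
    and bounded: "\<And>x. \<bar>f x\<bar> \<le> B" and support: "\<And>x. f x \<noteq> 0 \<Longrightarrow> norm x \<le> R"
  shows "(conv L f (y + h *\<^sub>R e) - conv L f y) / h
           = (LINT z|lborel. (f (y + h *\<^sub>R e - z) - f (y - z)) / h * L z)"
proof -
  have "(LINT z|lborel. (f (y + h *\<^sub>R e - z) - f (y - z)) / h * L z)
      = (LINT z|lborel. (f (y + h *\<^sub>R e - z) * L z - f (y - z) * L z) / h)"
    by (simp add: algebra_simps)
  also have "\<dots> = (conv L f (y + h *\<^sub>R e) - conv L f y) / h"
    by (simp add: conv_def integrable_conv_integrand[OF L f_meas bounded support])
  finally show ?thesis ..
qed

lemma abs_difference_quotient_le: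
  fixes f f' :: "'a::real_normed_vector \<Rightarrow> real"
  assumes deriv: "\<And>x. ((\<lambda>t. f (x + t *\<^sub>R e)) has_real_derivative f' x) (at 0)"
    and deriv_bounded: "\<And>x. \<bar>f' x\<bar> \<le> M" and support: "\<And>x. f x \<noteq> 0 \<Longrightarrow> norm x \<le> R"
    and h: "h \<noteq> 0" "\<bar>h\<bar> \<le> T"
  shows "\<bar>(f (y + h *\<^sub>R e - z) - f (y - z)) / h * L z\<bar>
           \<le> M * \<bar>L z * indicator (cball 0 (norm y + T * norm e + R)) z\<bar>"
proof (cases "f (y - z) = 0 \<and> f (y + h *\<^sub>R e - z) = 0")
  case False
  have "norm (y + h *\<^sub>R e) \<le> norm y + T * norm e"
    using norm_triangle_ineq[of y "h *\<^sub>R e"] mult_right_mono[OF h(2) norm_ge_zero[of e]] by simp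
  then have "z \<in> cball 0 (norm y + T * norm e + R)"
    using False norm_le_of_support[OF support, where y=y and z=z]
      norm_le_of_support[OF support, where y="y + h *\<^sub>R e" and z=z] h(2) norm_ge_zero[of e]
    unfolding mem_cball_0 by (smt (verit, ccfv_threshold) mult_nonneg_nonneg norm_ge_zero)
  moreover have "\<bar>(f (y + h *\<^sub>R e - z) - f (y - z)) / h\<bar> \<le> M"
    using lipschitz_along_line[OF deriv deriv_bounded, of "y - z" h] h(1)
    by (simp add: abs_divide divide_le_eq algebra_simps)
  then have "\<bar>(f (y + h *\<^sub>R e - z) - f (y - z)) / h\<bar> * \<bar>L z\<bar> \<le> M * \<bar>L z\<bar>"
    by (rule mult_right_mono) simp
  ultimately show ?thesis
    by (simp add: abs_mult)
next
  case True
  then show ?thesis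
    using deriv_bounded[of 0] by simp
qed

lemma conv_has_derivative_along:
  fixes L f f' :: "'a::euclidean_space \<Rightarrow> real"
  assumes L: "loc_integrable L"
    and f_meas [measurable]: "f \<in> borel_measurable borel"
    and [measurable]: "f' \<in> borel_measurable borel"
    and deriv: "\<And>x. ((\<lambda>t. f (x + t *\<^sub>R e)) has_real_derivative f' x) (at 0)"
    and bounded: "\<And>x. \<bar>f x\<bar> \<le> B" and deriv_bounded: "\<And>x. \<bar>f' x\<bar> \<le> M"
    and support: "\<And>x. f x \<noteq> 0 \<Longrightarrow> norm x \<le> R"
  shows "((\<lambda>t. conv L f (y + t *\<^sub>R e)) has_real_derivative conv L f' y) (at 0)"
  unfolding DERIV_def
proof (subst tendsto_at_iff_sequentially, intro allI impI)
  have [measurable]: "L \<in> borel_measurable borel"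
    using L by (rule loc_integrable_measurable)
  fix X :: "nat \<Rightarrow> real"
  assume X: "\<forall>i. X i \<in> UNIV - {0}" and X_lim: "X \<longlonglongrightarrow> 0"
  obtain T where T: "\<And>i. \<bar>X i\<bar> \<le> T"
    using convergent_imp_Bseq[OF convergentI[OF X_lim]] by (metis BseqE real_norm_def)
  define s where "s i z = (f (y + X i *\<^sub>R e - z) - f (y - z)) / X i * L z" for i z
  have "(\<lambda>i. LINT z|lborel. s i z) \<longlonglongrightarrow> (LINT z|lborel. f' (y - z) * L z)"
  proof (rule integral_dominated_convergence)
    show "integrable lborel (\<lambda>z. M * \<bar>L z * indicator (cball 0 (norm y + T * norm e + R)) z\<bar>)"
      using L by (intro integrable_mult_right integrable_abs loc_integrable_cball)
    show "AE z in lborel.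
        norm (s i z) \<le> M * \<bar>L z * indicator (cball 0 (norm y + T * norm e + R)) z\<bar>"
      for i
      unfolding s_def real_norm_def
      by (intro AE_I2 abs_difference_quotient_le[OF deriv deriv_bounded support]) (use X T in auto)
    show "(\<lambda>z. f' (y - z) * L z) \<in> borel_measurable lborel" "s i \<in> borel_measurable lborel" for i
      unfolding s_def by measurable
    have "(\<lambda>i. (f ((y - z) + X i *\<^sub>R e) - f (y - z)) / X i) \<longlonglongrightarrow> f' (y - z)" for z
    proof -
      have "((\<lambda>h. (f ((y - z) + h *\<^sub>R e) - f (y - z)) / h) \<longlongrightarrow> f' (y - z)) (at 0)"
        using deriv[of "y - z"] unfolding DERIV_def by simp
      moreover have "filterlim X (at 0) sequentially"
        using X X_lim by (auto simp: filterlim_at)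
      ultimately show ?thesis
        by (rule filterlim_compose)
    qed
    then show "AE z in lborel. (\<lambda>i. s i z) \<longlonglongrightarrow> f' (y - z) * L z"
      unfolding s_def by (intro AE_I2 tendsto_mult_right) (simp add: algebra_simps)
  qed
  then show "((\<lambda>h. (conv L f (y + (0 + h) *\<^sub>R e) - conv L f (y + 0 *\<^sub>R e)) / h) \<circ> X)
      \<longlonglongrightarrow> conv L f' y"
    by (simp add: o_def s_def conv_difference_quotient[OF L f_meas bounded support]
        conv_def[of L f'])
qed

lemma conv_translate:
  fixes L f :: "'a::euclidean_space \<Rightarrow> real"
  assumes [measurable]: "L \<in> borel_measurable borel" "f \<in> borel_measurable borel"
  shows "conv L f (y + t *\<^sub>R e) = (LINT w|lborel. f (y - w) * L (w + t *\<^sub>R e))"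
proof -
  have "conv L f (y + t *\<^sub>R e) = (LINT w|lborel. f (y + t *\<^sub>R e - (t *\<^sub>R e + w)) * L (t *\<^sub>R e + w))"
    unfolding conv_def by (rule lborel_integral_translate[symmetric]) measurable
  then show ?thesis
    by (simp add: algebra_simps)
qed

lemma abs_conv_segment_integrand_le:
  fixes f dK :: "'a::real_normed_vector \<Rightarrow> real"
  assumes bounded: "\<And>x. \<bar>f x\<bar> \<le> B" and support: "\<And>x. f x \<noteq> 0 \<Longrightarrow> norm x \<le> R"
    and \<tau>: "\<tau> \<in> {0..t}"
  shows "\<bar>f (y - w) * dK (w + \<tau> *\<^sub>R e)\<bar>
           \<le> B * (\<bar>dK (\<tau> *\<^sub>R e + w)\<bar> * indicator (cball 0 (norm y + R + t * norm e)) (\<tau> *\<^sub>R e + w))"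
proof (cases "f (y - w) = 0")
  case False
  have "norm (\<tau> *\<^sub>R e) \<le> t * norm e"
    using \<tau> by (simp add: mult_right_mono)
  then have "\<tau> *\<^sub>R e + w \<in> cball 0 (norm y + R + t * norm e)"
    using norm_le_of_support[where f=f and R=R and y=y and z=w, OF support False]
      norm_triangle_ineq[of "\<tau> *\<^sub>R e" w]
    by simp
  then show ?thesis
    using bounded[of "y - w"] by (simp add: abs_mult add.commute mult_right_mono)
next
  case True
  then show ?thesis
    using bounded[of 0] by simp
qed

lemma integrable_conv_segment:
  fixes dK f :: "'a::euclidean_space \<Rightarrow> real"
  assumes dK: "loc_integrable dK" and [measurable]: "f \<in> borel_measurable borel"
    and bounded: "\<And>x. \<bar>f x\<bar> \<le> B" and support: "\<And>x. f x \<noteq> 0 \<Longrightarrow> norm x \<le> R"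
  shows "integrable (lborel \<Otimes>\<^sub>M lborel)
           (\<lambda>(\<tau>, w). indicator {0..t} \<tau> * (f (y - w) * dK (w + \<tau> *\<^sub>R e)))"
proof (rule integrableI_bounded)
  have [measurable]: "dK \<in> borel_measurable borel"
    using dK by (rule loc_integrable_measurable)
  define P where "P \<tau> w = indicator {0..t} \<tau> * (f (y - w) * dK (w + \<tau> *\<^sub>R e))" for \<tau> w
  show "(\<lambda>(\<tau>, w). indicator {0..t} \<tau> * (f (y - w) * dK (w + \<tau> *\<^sub>R e)))
      \<in> borel_measurable (lborel \<Otimes>\<^sub>M lborel)"
    by measurable
  have B: "0 \<le> B"
    using bounded[of 0] by linarith
  define r where "r = norm y + R + t * norm e"
  have [measurable]: "cball (0::'a) r \<in> sets borel"
    by simp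
  define g where "g u = ennreal (\<bar>dK u\<bar> * indicator (cball 0 r) u)" for u
  have g_meas: "g \<in> borel_measurable borel"
    unfolding g_def by measurable
  define J where "J = (\<integral>\<^sup>+u. g u \<partial>lborel)"
  have J: "J < \<infinity>"
    using loc_integrable_cball[OF dK, of r]
    by (simp add: J_def g_def integrable_iff_bounded abs_mult)
  have inner: "(\<integral>\<^sup>+w. ennreal (norm (P \<tau> w)) \<partial>lborel) \<le> ennreal B * J * indicator {0..t} \<tau>" for \<tau>
  proof (cases "\<tau> \<in> {0..t}")
    case True
    have "norm (P \<tau> w) \<le> B * (\<bar>dK (\<tau> *\<^sub>R e + w)\<bar> * indicator (cball 0 r) (\<tau> *\<^sub>R e + w))" for w
      using True abs_conv_segment_integrand_le[where f=f and dK=dK, OF bounded support True]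
      by (simp add: P_def r_def)
    then have "(\<integral>\<^sup>+w. ennreal (norm (P \<tau> w)) \<partial>lborel) \<le> (\<integral>\<^sup>+w. ennreal B * g (\<tau> *\<^sub>R e + w) \<partial>lborel)"
      using B by (intro nn_integral_mono) (simp add: g_def ennreal_mult[symmetric])
    also have "\<dots> = ennreal B * J"
    proof -
      have "(\<lambda>w. g (\<tau> *\<^sub>R e + w)) \<in> borel_measurable borel"
        by (rule measurable_compose[OF _ g_meas])
          (intro borel_measurable_continuous_onI continuous_intros)
      then show ?thesis
        using lborel_nn_integral_translate[OF g_meas] by (simp add: J_def nn_integral_cmult)
    qed
    finally show ?thesis
      using True by simp
  qed (simp add: P_def)
  have "(\<integral>\<^sup>+p. ennreal (norm (case_prod P p)) \<partial>(lborel \<Otimes>\<^sub>M lborel))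
      = (\<integral>\<^sup>+\<tau>. (\<integral>\<^sup>+w. ennreal (norm (P \<tau> w)) \<partial>lborel) \<partial>lborel)"
    by (subst lborel.nn_integral_fst[symmetric]) (simp_all add: P_def case_prod_unfold)
  also have "\<dots> \<le> (\<integral>\<^sup>+\<tau>. ennreal B * J * indicator {0..t} \<tau> \<partial>lborel)"
    by (rule nn_integral_mono) (rule inner)
  also have "\<dots> < \<infinity>"
  proof -
    have "emeasure lborel {0..t} < \<infinity>"
      by (cases "0 \<le> t") simp_all
    then show ?thesis
      using J by (simp add: nn_integral_cmult_indicator ennreal_mult_less_top)
  qed
  finally show "(\<integral>\<^sup>+p. ennreal (norm ((\<lambda>(\<tau>, w).
      indicator {0..t} \<tau> * (f (y - w) * dK (w + \<tau> *\<^sub>R e))) p)) \<partial>(lborel \<Otimes>\<^sub>M lborel)) < \<infinity>"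
    by (simp add: P_def case_prod_unfold)
qed

lemma integral_indicator_along_line:
  fixes K dK :: "'a::real_normed_vector \<Rightarrow> real"
  assumes "line_derivative K dK e w" and "0 \<le> t"
  shows "(LINT \<tau>|lborel. indicator {0..t} \<tau> * dK (w + \<tau> *\<^sub>R e)) = K (w + t *\<^sub>R e) - K w"
proof -
  have "(LINT \<tau>|lborel. indicator {0..t} \<tau> *\<^sub>R dK (w + \<tau> *\<^sub>R e))
      = K (w + t *\<^sub>R e) - K (w + 0 *\<^sub>R e)"
  proof (rule integral_FTC_atLeastAtMost[OF assms(2)])
    show "((\<lambda>u. K (w + u *\<^sub>R e)) has_vector_derivative dK (w + x *\<^sub>R e)) (at x within {0..t})" for x
      using assms(1) unfolding line_derivative_def
      by (auto simp: has_real_derivative_iff_has_vector_derivative[symmetric]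
          intro: has_field_derivative_at_within)
    show "continuous_on {0..t} (\<lambda>\<tau>. dK (w + \<tau> *\<^sub>R e))"
      using assms(1) unfolding line_derivative_def by (auto intro: continuous_on_subset)
  qed
  then show ?thesis
    by simp
qed

lemma conv_increment_eq_integral:
  fixes K dK f :: "'a::euclidean_space \<Rightarrow> real"
  assumes K: "loc_integrable K" and dK: "loc_integrable dK"
    and line: "AE w in lborel. line_derivative K dK e w"
    and f_meas [measurable]: "f \<in> borel_measurable borel"
    and bounded: "\<And>x. \<bar>f x\<bar> \<le> B" and support: "\<And>x. f x \<noteq> 0 \<Longrightarrow> norm x \<le> R"
    and t: "0 \<le> t"
  shows "conv K f (y + t *\<^sub>R e) - conv K f y
           = (LINT \<tau>|lborel. indicator {0..t} \<tau> * conv dK f (y + \<tau> *\<^sub>R e))"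
proof -
  have [measurable]: "K \<in> borel_measurable borel" "dK \<in> borel_measurable borel"
    using K dK by (simp_all add: loc_integrable_measurable)
  define P where "P \<tau> w = indicator {0..t} \<tau> * (f (y - w) * dK (w + \<tau> *\<^sub>R e))" for \<tau> w
  have shifted_integrable: "integrable lborel (\<lambda>w. f (y - w) * K (w + u *\<^sub>R e))" for u
  proof -
    have "integrable lborel (\<lambda>w. f (y + u *\<^sub>R e - (u *\<^sub>R e + w)) * K (u *\<^sub>R e + w))"
      by (intro lborel_integrable_translate integrable_conv_integrand[OF K f_meas bounded support])
        measurable
    then show ?thesis
      by (simp add: algebra_simps)
  qed
  have "conv K f (y + t *\<^sub>R e) - conv K f y
      = (LINT w|lborel. f (y - w) * K (w + t *\<^sub>R e) - f (y - w) * K (w + 0 *\<^sub>R e))"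
    using conv_translate[of K f y t e] conv_translate[of K f y 0 e]
    by (simp add: shifted_integrable[of t] shifted_integrable[of 0, simplified])
  also have "\<dots> = (LINT w|lborel. (LINT \<tau>|lborel. P \<tau> w))"
  proof (rule integral_cong_AE)
    show "(\<lambda>w. LINT \<tau>|lborel. P \<tau> w) \<in> borel_measurable lborel"
      unfolding P_def by measurable
    show "AE w in lborel.
        f (y - w) * K (w + t *\<^sub>R e) - f (y - w) * K (w + 0 *\<^sub>R e) = (LINT \<tau>|lborel. P \<tau> w)"
      using line
    proof eventually_elim
      case (elim w)
      have "(LINT \<tau>|lborel. P \<tau> w)
          = f (y - w) * (LINT \<tau>|lborel. indicator {0..t} \<tau> * dK (w + \<tau> *\<^sub>R e))"
        by (simp add: P_def mult.left_commute)
      also have "\<dots> = f (y - w) * (K (w + t *\<^sub>R e) - K w)"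
        by (simp only: integral_indicator_along_line[OF elim t])
      finally show ?case
        by (simp add: right_diff_distrib)
    qed
  qed measurable
  also have "\<dots> = (LINT \<tau>|lborel. (LINT w|lborel. P \<tau> w))"
    using integrable_conv_segment[OF dK f_meas bounded support, of t y e]
    by (intro lborel_pair.Fubini_integral) (simp add: P_def case_prod_unfold)
  also have "\<dots> = (LINT \<tau>|lborel. indicator {0..t} \<tau> * conv dK f (y + \<tau> *\<^sub>R e))"
    by (simp add: P_def conv_translate)
  finally show ?thesis .
qed

(* Both sides are the derivative at 0 of t \<mapsto> conv K f (y + t e): directly for the left one,
   and through conv_increment_eq_integral for the right one. *)
lemma conv_deriv_transfer:
  fixes K dK f f' :: "'a::euclidean_space \<Rightarrow> real"
  assumes K: "loc_integrable K" and dK: "loc_integrable dK"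
    and line: "AE w in lborel. line_derivative K dK e w"
    and f_cont: "continuous_on UNIV f" and f'_meas: "f' \<in> borel_measurable borel"
    and deriv: "\<And>x. ((\<lambda>t. f (x + t *\<^sub>R e)) has_real_derivative f' x) (at 0)"
    and bounded: "\<And>x. \<bar>f x\<bar> \<le> B" and deriv_bounded: "\<And>x. \<bar>f' x\<bar> \<le> M"
    and support: "\<And>x. f x \<noteq> 0 \<Longrightarrow> norm x \<le> R"
  shows "conv K f' y = conv dK f y"
proof -
  have f_meas: "f \<in> borel_measurable borel"
    using f_cont by (rule borel_measurable_continuous_onI)
  define G where "G t = conv K f (y + t *\<^sub>R e) - conv K f y" for t
  define H where "H \<tau> = conv dK f (y + \<tau> *\<^sub>R e)" for \<tau>
  have "(H has_real_derivative conv dK f' (y + \<tau> *\<^sub>R e)) (at \<tau>)" for \<tau>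
    unfolding H_def
    using conv_has_derivative_along[OF dK f_meas f'_meas deriv bounded deriv_bounded support]
    by (rule has_real_derivative_along_line)
  then have H_cont: "continuous_on UNIV H"
    using DERIV_isCont by (blast intro: continuous_at_imp_continuous_on)
  have G_integral: "G t = integral {0..t} H" if "0 \<le> t" for t
  proof -
    have "set_integrable lborel {0..t} H"
      using H_cont by (intro borel_integrable_atLeastAtMost') (auto intro: continuous_on_subset)
    from set_borel_integral_eq_integral(2)[OF this]
    have "(LINT \<tau>|lborel. indicator {0..t} \<tau> * H \<tau>) = integral {0..t} H"
      by (simp add: set_lebesgue_integral_def)
    then show ?thesis
      using conv_increment_eq_integral[OF K dK line f_meas bounded support that, of y]
      by (simp add: G_def H_def)
  qed
  have "((\<lambda>t. conv K f (y + t *\<^sub>R e)) has_real_derivative conv K f' y) (at 0)"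
    by (rule conv_has_derivative_along[OF K f_meas f'_meas deriv bounded deriv_bounded support])
  then have "(G has_real_derivative conv K f' y - 0) (at 0)"
    unfolding G_def by (rule DERIV_diff) (rule DERIV_const)
  then have "(G has_real_derivative conv K f' y) (at 0 within {0..1})"
    unfolding diff_zero by (rule has_field_derivative_at_within)
  then have "((\<lambda>t. integral {0..t} H) has_real_derivative conv K f' y) (at 0 within {0..1})"
    by (rule has_field_derivative_transform_within[where d=1]) (auto simp: G_integral)
  moreover have "((\<lambda>t. integral {0..t} H) has_real_derivative H 0) (at 0 within {0..1})"
    using H_cont by (intro integral_has_real_derivative) (auto intro: continuous_on_subset)
  moreover have "at (0::real) within {0..1} \<noteq> bot"
    by (simp add: at_within_Icc_at_right)
  ultimately have "conv K f' y = H 0"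
    by (rule has_field_derivative_unique)
  then show ?thesis
    by (simp add: H_def)
qed

lemma abs_conv_le:
  fixes L g :: "'a::euclidean_space \<Rightarrow> real"
  assumes [measurable]: "L \<in> borel_measurable borel" "g \<in> borel_measurable borel" "A \<in> sets borel"
    and bounded: "\<And>x. \<bar>g x\<bar> \<le> S" and support: "\<And>z. g (y - z) \<noteq> 0 \<Longrightarrow> z \<in> A"
    and C: "0 \<le> C" and mass: "(\<integral>\<^sup>+z. ennreal (\<bar>L z\<bar> * indicator A z) \<partial>lborel) \<le> ennreal C"
  shows "\<bar>conv L g y\<bar> \<le> S * C"
proof -
  have S: "0 \<le> S"
    using bounded[of 0] by linarith
  have "\<bar>conv L g y\<bar> \<le> (LINT z|lborel. \<bar>g (y - z) * L z\<bar>)"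
    unfolding conv_def by (rule integral_abs_bound)
  also have "\<dots> = enn2real (\<integral>\<^sup>+z. ennreal \<bar>g (y - z) * L z\<bar> \<partial>lborel)"
    by (rule integral_eq_nn_integral) auto
  also have "\<dots> \<le> S * C"
  proof (rule enn2real_leI)
    have "\<bar>g (y - z) * L z\<bar> \<le> S * (\<bar>L z\<bar> * indicator A z)" for z
      using bounded[of "y - z"] support[of z] S
      by (cases "g (y - z) = 0") (auto simp: abs_mult mult_right_mono)
    then have "(\<integral>\<^sup>+z. ennreal \<bar>g (y - z) * L z\<bar> \<partial>lborel)
        \<le> (\<integral>\<^sup>+z. ennreal S * ennreal (\<bar>L z\<bar> * indicator A z) \<partial>lborel)"
      using S by (intro nn_integral_mono) (simp add: ennreal_mult[symmetric])
    also have "\<dots> = ennreal S * (\<integral>\<^sup>+z. ennreal (\<bar>L z\<bar> * indicator A z) \<partial>lborel)"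
      by (rule nn_integral_cmult) measurable
    also have "\<dots> \<le> ennreal (S * C)"
      using mult_left_mono[OF mass, of "ennreal S"] S C by (simp add: ennreal_mult)
    finally show "(\<integral>\<^sup>+z. ennreal \<bar>g (y - z) * L z\<bar> \<partial>lborel) \<le> ennreal (S * C)" .
  qed (use S C in simp)
  finally show ?thesis .
qed

lemma abs_conv_aniso_kernel_deriv_le:
  fixes w :: "real^'n::finite" and g :: "real^'n \<Rightarrow> real"
  assumes w: "\<And>k. 0 < w $ k" and n: "3 \<le> CARD('n)" and \<rho>: "0 \<le> \<rho>"
    and [measurable]: "g \<in> borel_measurable borel"
    and bounded: "\<And>x. \<bar>g x\<bar> \<le> S" and support: "\<And>z. g (y - z) \<noteq> 0 \<Longrightarrow> z \<in> aniso_box w \<rho>"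
  defines "p \<equiv> -2 / real CARD('n)"
  shows "\<bar>conv (aniso_kernel_deriv w j) g y\<bar>
           \<le> S * (w $ j * (2 * \<rho> powr (p + 1) / (p + 1)) ^ CARD('n))"
proof (rule abs_conv_le[OF _ _ _ bounded support])
  have P: "0 < (\<Prod>k\<in>UNIV. w $ k)"
    using w by (simp add: prod_pos)
  have p: "-1 < p"
    using n by (simp add: p_def field_simps)
  show "0 \<le> w $ j * (2 * \<rho> powr (p + 1) / (p + 1)) ^ CARD('n)"
    using w[of j] p by simp
  have "(\<integral>\<^sup>+z. ennreal (\<bar>aniso_kernel_deriv w j z\<bar> * indicator (aniso_box w \<rho>) z) \<partial>lborel)
      \<le> ennreal ((\<Prod>k\<in>UNIV. w $ k) * w $ j * (2 * \<rho> powr (p + 1) / (p + 1)) ^ CARD('n)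
                  / (\<Prod>k\<in>UNIV. w $ k))"
    using w[of j] P \<rho> p unfolding p_def
    by (intro nn_integral_aniso_box_bound[OF aniso_kernel_deriv_measurable w]
        abs_aniso_kernel_deriv_le w) auto
  then show "(\<integral>\<^sup>+z. ennreal (\<bar>aniso_kernel_deriv w j z\<bar> * indicator (aniso_box w \<rho>) z) \<partial>lborel)
      \<le> ennreal (w $ j * (2 * \<rho> powr (p + 1) / (p + 1)) ^ CARD('n))"
    using P by (simp add: less_imp_neq[OF w, symmetric])
qed simp_all

section \<open>Partial derivatives of bounded C4 functions\<close>

lemma pdl_append: "pdl (xs @ ys) f = pdl xs (pdl ys f)"
  by (induction xs) auto

lemma C4b_has_derivative:
  "C4b f \<Longrightarrow> length is < 4
     \<Longrightarrow> ((\<lambda>t. pdl is f (y + t *\<^sub>R axis i 1)) has_real_derivative pdl (i # is) f y) (at 0)"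
  unfolding C4b_def by blast

lemma C4b_continuous: "C4b f \<Longrightarrow> length is \<le> 4 \<Longrightarrow> continuous_on UNIV (pdl is f)"
  unfolding C4b_def by blast

lemma C4b_bounded: "C4b f \<Longrightarrow> length is \<le> 4 \<Longrightarrow> \<exists>B. \<forall>x. \<bar>pdl is f x\<bar> \<le> B"
  unfolding C4b_def bounded_iff by fastforce

lemma C4b_measurable: "C4b f \<Longrightarrow> length is \<le> 4 \<Longrightarrow> pdl is f \<in> borel_measurable borel"
  by (rule borel_measurable_continuous_onI) (rule C4b_continuous)

lemma abs_pdl_le_supn:
  assumes "C4b f" "length is \<le> 4"
  shows "\<bar>pdl is f x\<bar> \<le> supn (pdl is f)"
proof -
  obtain B where "\<And>x. \<bar>pdl is f x\<bar> \<le> B"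
    using C4b_bounded[OF assms] by blast
  then show ?thesis
    unfolding supn_def by (intro cSUP_upper bdd_aboveI2) auto
qed

lemma C4b_support:
  assumes f: "C4b f" and S: "closed S" and support: "\<And>x. f x \<noteq> 0 \<Longrightarrow> x \<in> S"
  shows "length is \<le> 4 \<Longrightarrow> pdl is f x \<noteq> 0 \<Longrightarrow> x \<in> S"
proof (induction "is" arbitrary: x)
  case Nil
  then show ?case
    using support by simp
next
  case (Cons i "is")
  show ?case
  proof (rule ccontr)
    assume "x \<notin> S"
    then obtain d where d: "0 < d" "ball x d \<subseteq> - S"
      using S by (metis closed_def open_contains_ball ComplI)
    have "\<forall>\<^sub>F t in nhds 0. pdl is f (x + t *\<^sub>R axis i 1) = 0"
    proof -
      have "\<forall>\<^sub>F t in nhds (0::real). t \<in> ball 0 d"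
        using d by (intro eventually_nhds_in_open) auto
      then show ?thesis
      proof eventually_elim
        case (elim t)
        then have "x + t *\<^sub>R axis i 1 \<in> ball x d"
          by (simp add: dist_norm)
        then have "x + t *\<^sub>R axis i 1 \<notin> S"
          using d by auto
        then show ?case
          using Cons.IH Cons.prems by auto
      qed
    qed
    then have "((\<lambda>t. pdl is f (x + t *\<^sub>R axis i 1)) has_real_derivative 0) (at 0)"
      by (subst DERIV_cong_ev[where g="\<lambda>_. 0"]) auto
    moreover have "((\<lambda>t. pdl is f (x + t *\<^sub>R axis i 1)) has_real_derivative pdl (i # is) f x) (at 0)"
      using Cons.prems by (intro C4b_has_derivative[OF f]) simp
    ultimately show False
      using DERIV_unique Cons.prems by fastforce
  qed
qed

lemma pdl_diff:
  assumes f: "C4b f" and g: "C4b g"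
  shows "length is \<le> 4 \<Longrightarrow> pdl is (\<lambda>x. f x - g x) = (\<lambda>x. pdl is f x - pdl is g x)"
proof (induction "is")
  case (Cons i "is")
  have "length is < 4"
    using Cons.prems by simp
  show ?case
  proof
    fix y
    have "((\<lambda>t. pdl is f (y + t *\<^sub>R axis i 1) - pdl is g (y + t *\<^sub>R axis i 1))
        has_real_derivative pdl (i # is) f y - pdl (i # is) g y) (at 0)"
      by (rule DERIV_diff; rule C4b_has_derivative) (use f g \<open>length is < 4\<close> in auto)
    then show "pdl (i # is) (\<lambda>x. f x - g x) y = pdl (i # is) f y - pdl (i # is) g y"
      using Cons.IH \<open>length is < 4\<close> by (simp add: pd_def DERIV_imp_deriv)
  qed
qed simp

lemma C4b_diff:
  assumes f: "C4b f" and g: "C4b g"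
  shows "C4b (\<lambda>x. f x - g x)"
  unfolding C4b_def
proof (intro conjI allI impI)
  fix "is" :: "3 list" and i y
  assume "length is < 4"
  have "((\<lambda>t. pdl is f (y + t *\<^sub>R axis i 1) - pdl is g (y + t *\<^sub>R axis i 1))
      has_real_derivative pdl (i # is) f y - pdl (i # is) g y) (at 0)"
    by (rule DERIV_diff; rule C4b_has_derivative) (use f g \<open>length is < 4\<close> in auto)
  then show "((\<lambda>t. pdl is (\<lambda>x. f x - g x) (y + t *\<^sub>R axis i 1))
      has_real_derivative pdl (i # is) (\<lambda>x. f x - g x) y) (at 0)"
    using pdl_diff[OF f g, of "is"] pdl_diff[OF f g, of "i # is"] \<open>length is < 4\<close> by simp
next
  fix "is" :: "3 list"
  assume "length is \<le> 4"
  moreover obtain B1 B2 where "\<And>x. \<bar>pdl is f x\<bar> \<le> B1" "\<And>x. \<bar>pdl is g x\<bar> \<le> B2"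
    using C4b_bounded[OF f] C4b_bounded[OF g] \<open>length is \<le> 4\<close> by metis
  ultimately show "continuous_on UNIV (pdl is (\<lambda>x. f x - g x))"
      "bounded (range (pdl is (\<lambda>x. f x - g x)))"
    using pdl_diff[OF f g] C4b_continuous[OF f] C4b_continuous[OF g]
    by (auto intro!: continuous_on_diff boundedI[where B="B1 + B2"] abs_triangle_ineq4[THEN order_trans]
        add_mono)
qed

lemma pdl_conv:
  assumes L: "loc_integrable L" and f: "C4b f"
    and S: "closed S" "\<And>x. x \<in> S \<Longrightarrow> norm x \<le> R" and support: "\<And>x. f x \<noteq> 0 \<Longrightarrow> x \<in> S"
  shows "length is \<le> 4 \<Longrightarrow> pdl is (conv L f) = conv L (pdl is f)"
proof (induction "is")
  case (Cons i "is")
  have "length is < 4"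
    using Cons.prems by simp
  obtain B M where B_M: "\<And>x. \<bar>pdl is f x\<bar> \<le> B" "\<And>x. \<bar>pdl (i # is) f x\<bar> \<le> M"
    using C4b_bounded[OF f, of "is"] C4b_bounded[OF f, of "i # is"] Cons.prems by force
  show ?case
  proof
    fix y
    have "((\<lambda>t. conv L (pdl is f) (y + t *\<^sub>R axis i 1))
        has_real_derivative conv L (pdl (i # is) f) y) (at 0)"
      using B_M \<open>length is < 4\<close> C4b_support[OF f S(1) support, of "is"] S(2)
      by (intro conv_has_derivative_along[OF L] C4b_measurable[OF f] C4b_has_derivative[OF f]) auto
    then show "pdl (i # is) (conv L f) y = conv L (pdl (i # is) f) y"
      using Cons.IH \<open>length is < 4\<close> by (simp add: pd_def DERIV_imp_deriv)
  qed
qed simp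

lemma pdl_conv_aniso_kernel:
  fixes w :: "real^3" and \<rho> :: "real^3 \<Rightarrow> real"
  assumes w: "\<And>k. 0 < w $ k" and \<rho>: "C4b \<rho>"
    and S: "closed S" "\<And>x. x \<in> S \<Longrightarrow> norm x \<le> R" and support: "\<And>x. \<rho> x \<noteq> 0 \<Longrightarrow> x \<in> S"
    and \<gamma>: "length \<gamma> \<le> 4"
  shows "pdl (\<gamma> @ [j]) (conv (aniso_kernel w) \<rho>) = conv (aniso_kernel_deriv w j) (pdl \<gamma> \<rho>)"
proof -
  have K: "loc_integrable (aniso_kernel w)"
    using w by (rule loc_integrable_aniso_kernel) simp
  have dK: "loc_integrable (aniso_kernel_deriv w j)"
    using w by (rule loc_integrable_aniso_kernel_deriv) simp
  obtain B where B: "\<And>x. \<bar>\<rho> x\<bar> \<le> B"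
    using C4b_bounded[OF \<rho>, of "[]"] by auto
  obtain M where M: "\<And>x. \<bar>pdl [j] \<rho> x\<bar> \<le> M"
    using C4b_bounded[OF \<rho>, of "[j]"] by auto
  have "pdl [j] (conv (aniso_kernel w) \<rho>) = conv (aniso_kernel w) (pdl [j] \<rho>)"
    using pdl_conv[OF K \<rho> S support, of "[j]"] by simp
  also have "\<dots> = conv (aniso_kernel_deriv w j) \<rho>"
  proof
    fix y
    show "conv (aniso_kernel w) (pdl [j] \<rho>) y = conv (aniso_kernel_deriv w j) \<rho> y"
    proof (rule conv_deriv_transfer[OF K dK AE_aniso_kernel_along_axis[OF w] _ _ _ B M])
      show "continuous_on UNIV \<rho>" "pdl [j] \<rho> \<in> borel_measurable borel"
        using C4b_continuous[OF \<rho>, of "[]"] C4b_measurable[OF \<rho>, of "[j]"] by simp_all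
      show "((\<lambda>t. \<rho> (x + t *\<^sub>R axis j 1)) has_real_derivative pdl [j] \<rho> x) (at 0)" for x
        using C4b_has_derivative[OF \<rho>, of "[]"] by simp
      show "\<rho> x \<noteq> 0 \<Longrightarrow> norm x \<le> R" for x
        using S support by blast
    qed simp
  qed
  finally show ?thesis
    using pdl_conv[OF dK \<rho> S support \<gamma>] by (simp add: pdl_append)
qed

section \<open>The self-similar potential\<close>

definition self_similar_weight :: "real \<Rightarrow> real^3" where
  "self_similar_weight s = (\<chi> k. if k = 1 then exp (- 3 * s / 2) else exp (- s / 2))"

lemma self_similar_weight_pos: "0 < self_similar_weight s $ k"
  by (simp add: self_similar_weight_def)

lemma prod_self_similar_weight: "(\<Prod>k\<in>UNIV. self_similar_weight s $ k) = exp (- 5 * s / 2)"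
  unfolding UNIV_3 by (simp add: self_similar_weight_def mult_exp_exp)

lemma aniso_quad_self_similar_weight:
  "aniso_quad (self_similar_weight s) z = exp (- 3 * s) * (z $ 1)\<^sup>2 + exp (- s) * (cnorm z)\<^sup>2"
proof -
  have "(exp x)\<^sup>2 = exp (2 * x)" for x :: real
    by (simp add: power2_eq_square exp_add[symmetric])
  then show ?thesis
    by (simp add: aniso_quad_def self_similar_weight_def sum_3 cnorm_def algebra_simps)
qed

lemma Phi_eq_conv: "Phi s Rel Rpl = conv (aniso_kernel (self_similar_weight s)) (\<lambda>x. Rpl x - Rel x)"
  unfolding Phi_def conv_def aniso_kernel_def prod_self_similar_weight aniso_quad_self_similar_weight
  by (simp add: fun_eq_iff mult.commute)

lemma abs_component_le_cnorm: "k \<noteq> 1 \<Longrightarrow> \<bar>x $ k\<bar> \<le> cnorm x"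
  using exhaust_3[of k] real_sqrt_le_mono[of "(x $ 2)\<^sup>2" "(x $ 2)\<^sup>2 + (x $ 3)\<^sup>2"]
    real_sqrt_le_mono[of "(x $ 3)\<^sup>2" "(x $ 2)\<^sup>2 + (x $ 3)\<^sup>2"]
  by (auto simp: cnorm_def)

lemma Xplus_closed: "closed (Xplus s)"
  unfolding Xplus_def cnorm_def
  by (intro closed_Collect_conj closed_Collect_le continuous_intros)

lemma Xplus_bounded: "x \<in> Xplus s \<Longrightarrow> norm x \<le> exp (3 * s / 2) + 2 * exp (s / 2)"
  using norm_le_l1_cart[of x] abs_component_le_cnorm[of 2 x] abs_component_le_cnorm[of 3 x]
  by (simp add: Xplus_def sum_3)

lemma mem_aniso_box_if_Xs_minus_Xplus:
  assumes \<epsilon>: "0 < \<epsilon>" "\<epsilon> \<le> 1/64" and y: "y \<in> Xs \<epsilon> s" and x: "y - z \<in> Xplus s"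
  shows "z \<in> aniso_box (self_similar_weight s) 2"
proof -
  have "sqrt \<epsilon> \<le> sqrt (1/4)" "root 6 \<epsilon> \<le> root 6 (1/64)"
    using \<epsilon> by (simp_all add: real_root_le_mono)
  moreover have "sqrt (1/4) = (1/2::real)"
    by (simp add: real_sqrt_divide)
  moreover have "root 6 (1/64) = (1/2::real)"
    by (rule real_root_pos_unique) (auto simp: power_divide)
  ultimately have y1: "\<bar>y $ 1\<bar> \<le> exp (3 * s / 2)" and y23: "cnorm y \<le> exp (s / 2)"
    using y unfolding Xs_def by (auto intro: order_trans mult_right_mono)
  have "\<bar>z $ k\<bar> \<le> \<bar>y $ k\<bar> + \<bar>(y - z) $ k\<bar>" for k
    by simp
  then have "\<bar>z $ k\<bar> \<le> 2 * exp (s / 2)" if "k \<noteq> 1" for k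
    using that y23 x abs_component_le_cnorm[of k y] abs_component_le_cnorm[of k "y - z"]
    by (smt (verit) Xplus_def mem_Collect_eq)
  moreover have "\<bar>z $ 1\<bar> \<le> 2 * exp (3 * s / 2)"
    using y1 x \<open>\<bar>z $ 1\<bar> \<le> \<bar>y $ 1\<bar> + \<bar>(y - z) $ 1\<bar>\<close> by (simp add: Xplus_def)
  ultimately show ?thesis
    by (auto simp: aniso_box_def self_similar_weight_def forall_3 exp_minus field_simps)
qed

lemma box_constant_3:
  "(2 * 2 powr (-2 / real CARD(3) + 1) / (-2 / real CARD(3) + 1)) ^ CARD(3) = (432::real)"
proof -
  have "(2 powr (1/3) :: real) ^ 3 = 2"
    by (simp add: powr_power)
  then show ?thesis
    by (simp add: power_mult_distrib power_divide)
qed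

lemma abs_pdl_Phi_le:
  assumes \<epsilon>: "0 < \<epsilon>" "\<epsilon> \<le> 1/64" and Rel: "C4b Rel" and Rpl: "C4b Rpl"
    and support: "\<forall>x. Rel x \<noteq> 0 \<longrightarrow> x \<in> Xplus s" "\<forall>x. Rpl x \<noteq> 0 \<longrightarrow> x \<in> Xplus s"
    and y: "y \<in> Xs \<epsilon> s" and \<gamma>: "length \<gamma> \<le> 4"
  shows "\<bar>pdl (\<gamma> @ [j]) (Phi s Rel Rpl) y\<bar>
           \<le> 432 * self_similar_weight s $ j * (supn (pdl \<gamma> Rel) + supn (pdl \<gamma> Rpl))"
proof -
  define \<rho> where "\<rho> x = Rpl x - Rel x" for x
  have \<rho>: "C4b \<rho>"
    unfolding \<rho>_def by (rule C4b_diff[OF Rpl Rel])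
  have \<rho>_support: "\<rho> x \<noteq> 0 \<Longrightarrow> x \<in> Xplus s" for x
    using support by (force simp: \<rho>_def)
  have "pdl (\<gamma> @ [j]) (Phi s Rel Rpl)
      = conv (aniso_kernel_deriv (self_similar_weight s) j) (pdl \<gamma> \<rho>)"
    unfolding Phi_eq_conv \<rho>_def[symmetric]
    by (rule pdl_conv_aniso_kernel[OF self_similar_weight_pos \<rho> Xplus_closed Xplus_bounded
          \<rho>_support \<gamma>])
  moreover have "\<bar>conv (aniso_kernel_deriv (self_similar_weight s) j) (pdl \<gamma> \<rho>) y\<bar>
      \<le> (supn (pdl \<gamma> Rel) + supn (pdl \<gamma> Rpl)) * (self_similar_weight s $ j * 432)"
  proof (rule abs_conv_aniso_kernel_deriv_le[OF self_similar_weight_pos, where \<rho>=2,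
        simplified box_constant_3])
    show "pdl \<gamma> \<rho> \<in> borel_measurable borel"
      by (rule C4b_measurable[OF \<rho> \<gamma>])
    show "\<bar>pdl \<gamma> \<rho> x\<bar> \<le> supn (pdl \<gamma> Rel) + supn (pdl \<gamma> Rpl)" for x
      using abs_pdl_le_supn[OF Rel \<gamma>, of x] abs_pdl_le_supn[OF Rpl \<gamma>, of x]
      unfolding \<rho>_def pdl_diff[OF Rpl Rel \<gamma>] by simp
    show "z \<in> aniso_box (self_similar_weight s) 2" if "pdl \<gamma> \<rho> (y - z) \<noteq> 0" for z
      using \<epsilon> y C4b_support[OF \<rho> Xplus_closed \<rho>_support \<gamma> that]
      by (rule mem_aniso_box_if_Xs_minus_Xplus)
  qed simp_all
  ultimately show ?thesis
    by (simp add: ac_simps)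
qed

theorem lemma5p2:
  shows "\<exists>C. \<forall>\<epsilon> s Rel Rpl y \<gamma> \<nu>.
    0 < \<epsilon> \<and> \<epsilon> \<le> 1/64 \<and> s \<ge> - ln \<epsilon>
    \<and> C4b Rel \<and> C4b Rpl
    \<and> (\<forall>x. Rel x \<noteq> 0 \<longrightarrow> x \<in> Xplus s)
    \<and> (\<forall>x. Rpl x \<noteq> 0 \<longrightarrow> x \<in> Xplus s)
    \<and> y \<in> Xs \<epsilon> s \<and> length \<gamma> \<le> 4 \<and> \<nu> \<in> {2, 3}
    \<longrightarrow> \<bar>pdl (\<gamma> @ [1]) (Phi s Rel Rpl) y\<bar>
          \<le> C * exp (- 3 * s / 2) * (supn (pdl \<gamma> Rel) + supn (pdl \<gamma> Rpl))
      \<and> \<bar>pdl (\<gamma> @ [\<nu>]) (Phi s Rel Rpl) y\<bar>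
          \<le> C * exp (- s / 2) * (supn (pdl \<gamma> Rel) + supn (pdl \<gamma> Rpl))"
proof (intro exI[of _ 432] allI impI, elim conjE)
  fix \<epsilon> s :: real and Rel Rpl :: "real^3 \<Rightarrow> real" and y :: "real^3" and \<gamma> :: "3 list" and \<nu> :: 3
  assume \<epsilon>: "0 < \<epsilon>" "\<epsilon> \<le> 1/64" and Rel: "C4b Rel" and Rpl: "C4b Rpl"
    and support: "\<forall>x. Rel x \<noteq> 0 \<longrightarrow> x \<in> Xplus s" "\<forall>x. Rpl x \<noteq> 0 \<longrightarrow> x \<in> Xplus s"
    and y: "y \<in> Xs \<epsilon> s" and \<gamma>: "length \<gamma> \<le> 4" and \<nu>: "\<nu> \<in> {2, 3}"
  have "self_similar_weight s $ 1 = exp (- 3 * s / 2)" "self_similar_weight s $ \<nu> = exp (- s / 2)"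
    using \<nu> by (auto simp: self_similar_weight_def)
  then show "\<bar>pdl (\<gamma> @ [1]) (Phi s Rel Rpl) y\<bar>
        \<le> 432 * exp (- 3 * s / 2) * (supn (pdl \<gamma> Rel) + supn (pdl \<gamma> Rpl))
      \<and> \<bar>pdl (\<gamma> @ [\<nu>]) (Phi s Rel Rpl) y\<bar>
        \<le> 432 * exp (- s / 2) * (supn (pdl \<gamma> Rel) + supn (pdl \<gamma> Rpl))"
    using abs_pdl_Phi_le[OF \<epsilon> Rel Rpl support y \<gamma>] by metis
qed

end
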